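(* Let $m,d\in\mathbb N$. Let $H$ be a bipartite graph with vertex classes $X$ and $Y$ such that any two sets $X'\subseteq X$, $Y'\subseteq Y$ with $|X'|=|Y'|=m$ have an edge between them. If $|Y|\ge (3d+4)m$, then there is a set $B\subseteq X$ with $|B|\le m$ such that every $U\subseteq X\setminus B$ with $|U|\le 2m$ satisfies $|N(U)|\ge d|U|$.
   Context: For $U\subseteq V(H)$, $N(U)=\big(\bigcup_{u\in U}N(u)\big)\setminus U$ is the exterior neighbourhood in $H$. *)

theory Defs
  imports Main
begin

definition bipartite_graph :: "'a set \<Rightarrow> 'a set \<Rightarrow> ('a \<Rightarrow> 'a \<Rightarrow> bool) \<Rightarrow> bool" where
  "bipartite_graph X Y E \<longleftrightarrow>
     finite X \<and> finite Y \<and> X \<inter> Y = {} \<and>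
     (\<forall>u v. E u v \<longrightarrow> E v u) \<and>
     (\<forall>u v. E u v \<longrightarrow> (u \<in> X \<and> v \<in> Y) \<or> (u \<in> Y \<and> v \<in> X))"

definition nbr :: "'a set \<Rightarrow> ('a \<Rightarrow> 'a \<Rightarrow> bool) \<Rightarrow> 'a \<Rightarrow> 'a set" where
  "nbr V E u = {v \<in> V. E u v}"

definition ext_nbhd :: "'a set \<Rightarrow> ('a \<Rightarrow> 'a \<Rightarrow> bool) \<Rightarrow> 'a set \<Rightarrow> 'a set" where
  "ext_nbhd V E U = (\<Union>u\<in>U. nbr V E u) - U"

end

theory Submission
  imports Defs
begin

text \<open>Take B to be a largest set of at most m vertices of X whose neighbourhood is smaller
than d times its size. If some U of at most 2m vertices outside B also expanded poorly, then
so would B \<union> U, since neighbourhoods are subadditive. Being larger than B, the union has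
at least m vertices; but then the density condition forces all but fewer than m vertices of
Y into its neighbourhood, while its neighbourhood has fewer than 3dm vertices and
|Y| \<ge> (3d + 4)m.\<close>

lemma ext_nbhd_subset: "ext_nbhd V E U \<subseteq> V"
  unfolding ext_nbhd_def nbr_def by blast

lemma finite_ext_nbhd: "finite V \<Longrightarrow> finite (ext_nbhd V E U)"
  using ext_nbhd_subset finite_subset by metis

lemma ext_nbhd_Un_subset: "ext_nbhd V E (A \<union> B) \<subseteq> ext_nbhd V E A \<union> ext_nbhd V E B"
  unfolding ext_nbhd_def by blast

lemma card_ext_nbhd_Un_le:
  assumes "finite V"
  shows "card (ext_nbhd V E (A \<union> B)) \<le> card (ext_nbhd V E A) + card (ext_nbhd V E B)"
proof -
  have "card (ext_nbhd V E (A \<union> B)) \<le> card (ext_nbhd V E A \<union> ext_nbhd V E B)"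
    by (rule card_mono) (simp_all add: assms finite_ext_nbhd ext_nbhd_Un_subset)
  also have "\<dots> \<le> card (ext_nbhd V E A) + card (ext_nbhd V E B)"
    by (rule card_Un_le)
  finally show ?thesis .
qed

lemma bipartite_graph_finite_vertices: "bipartite_graph X Y E \<Longrightarrow> finite (X \<union> Y)"
  unfolding bipartite_graph_def by blast

lemma bipartite_no_edge_outside_ext_nbhd:
  assumes "bipartite_graph X Y E" "S \<subseteq> X" "x \<in> S" "y \<in> Y - ext_nbhd (X \<union> Y) E S"
  shows "\<not> E x y"
  using assms unfolding bipartite_graph_def ext_nbhd_def nbr_def by blast

lemma bipartite_dense_card_ext_nbhd:
  assumes H: "bipartite_graph X Y E"
    and dense: "\<forall>X' Y'. X' \<subseteq> X \<and> Y' \<subseteq> Y \<and> card X' = m \<and> card Y' = m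
                  \<longrightarrow> (\<exists>x\<in>X'. \<exists>y\<in>Y'. E x y)"
    and S: "S \<subseteq> X" "m \<le> card S"
  shows "card Y < card (ext_nbhd (X \<union> Y) E S) + m"
proof (rule ccontr)
  let ?N = "ext_nbhd (X \<union> Y) E S"
  assume "\<not> ?thesis"
  moreover have "card Y - card ?N \<le> card (Y - ?N)"
    using H by (intro diff_card_le_card_Diff finite_ext_nbhd bipartite_graph_finite_vertices)
  ultimately have "m \<le> card (Y - ?N)" by linarith
  then obtain Y' where Y': "Y' \<subseteq> Y - ?N" "card Y' = m"
    by (meson obtain_subset_with_card_n)
  obtain X' where X': "X' \<subseteq> S" "card X' = m"
    using S(2) by (meson obtain_subset_with_card_n)
  have "X' \<subseteq> X" "Y' \<subseteq> Y"
    using X'(1) Y'(1) S(1) by auto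
  then have "\<exists>x\<in>X'. \<exists>y\<in>Y'. E x y"
    using dense X'(2) Y'(2) by blast
  then show False
    using bipartite_no_edge_outside_ext_nbhd[OF H S(1)] X' Y' by blast
qed

lemma bipartite_dense_poor_expander_small:
  fixes m d :: nat
  assumes H: "bipartite_graph X Y E"
    and dense: "\<forall>X' Y'. X' \<subseteq> X \<and> Y' \<subseteq> Y \<and> card X' = m \<and> card Y' = m
                  \<longrightarrow> (\<exists>x\<in>X'. \<exists>y\<in>Y'. E x y)"
    and sizeY: "card Y \<ge> (3 * d + 4) * m"
    and S: "S \<subseteq> X" "card S \<le> 3 * m"
    and poor: "card (ext_nbhd (X \<union> Y) E S) < d * card S"
  shows "card S < m"
proof (rule ccontr)
  assume "\<not> card S < m"
  then have "card Y < card (ext_nbhd (X \<union> Y) E S) + m"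
    using bipartite_dense_card_ext_nbhd[OF H dense S(1)] by simp
  moreover have "d * card S \<le> 3 * d * m"
    using S(2) by (metis mult.assoc mult.commute mult_le_mono2)
  moreover have "(3 * d + 4) * m = 3 * d * m + 4 * m"
    by (simp add: add_mult_distrib)
  ultimately show False
    using poor sizeY by linarith
qed

lemma finite_subset_max_card:
  assumes "finite X" "P {}"
  obtains B where "B \<subseteq> X" "P B" "\<And>S. S \<subseteq> X \<Longrightarrow> P S \<Longrightarrow> card S \<le> card B"
proof -
  have "\<forall>S. S \<subseteq> X \<and> P S \<longrightarrow> card S < Suc (card X)"
    using assms(1) by (simp add: card_mono less_Suc_eq_le)
  moreover have "{} \<subseteq> X \<and> P {}"
    using assms(2) by simp
  ultimately obtain B where "B \<subseteq> X \<and> P B" and "\<forall>S. S \<subseteq> X \<and> P S \<longrightarrow> card S \<le> card B"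
    using Lattices_Big.ex_has_greatest_nat[where P = "\<lambda>S. S \<subseteq> X \<and> P S" and f = card] by metis
  then show ?thesis
    by (intro that[of B]) auto
qed

lemma bipartite_dense_expands_beside_max_poor_set:
  fixes m d :: nat
  assumes H: "bipartite_graph X Y E"
    and dense: "\<forall>X' Y'. X' \<subseteq> X \<and> Y' \<subseteq> Y \<and> card X' = m \<and> card Y' = m
                  \<longrightarrow> (\<exists>x\<in>X'. \<exists>y\<in>Y'. E x y)"
    and sizeY: "card Y \<ge> (3 * d + 4) * m"
    and B: "B \<subseteq> X" "card B \<le> m" "card (ext_nbhd (X \<union> Y) E B) \<le> d * card B"
    and B_max: "\<And>S. S \<subseteq> X \<Longrightarrow> card S \<le> m \<Longrightarrow> card (ext_nbhd (X \<union> Y) E S) \<le> d * card S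
                  \<Longrightarrow> card S \<le> card B"
    and U: "U \<subseteq> X - B" "card U \<le> 2 * m"
  shows "d * card U \<le> card (ext_nbhd (X \<union> Y) E U)"
proof (rule ccontr)
  let ?N = "ext_nbhd (X \<union> Y) E"
  assume NU: "\<not> ?thesis"
  have "finite X" using H unfolding bipartite_graph_def by blast
  have finU: "finite U" "finite B"
    using U(1) B(1) by (auto intro: finite_subset[OF _ \<open>finite X\<close>])
  have cS: "card (B \<union> U) = card B + card U"
    using U(1) finU by (intro card_Un_disjoint) auto
  have "card (?N (B \<union> U)) \<le> card (?N B) + card (?N U)"
    using H by (intro card_ext_nbhd_Un_le bipartite_graph_finite_vertices)
  moreover have "d * card (B \<union> U) = d * card B + d * card U"
    using cS by (simp add: add_mult_distrib2)
  ultimately have poor: "card (?N (B \<union> U)) < d * card (B \<union> U)"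
    using B(3) NU by linarith
  moreover have BU: "B \<union> U \<subseteq> X" "card (B \<union> U) \<le> 3 * m"
    using B U cS by auto
  ultimately have "card (B \<union> U) < m"
    by (intro bipartite_dense_poor_expander_small[OF H dense sizeY])
  then have "card (B \<union> U) \<le> card B"
    using B_max BU(1) poor by simp
  then have "U = {}" using cS finU by simp
  then show False using NU by simp
qed

theorem proposition3p37:
  fixes X Y :: "'a set" and E :: "'a \<Rightarrow> 'a \<Rightarrow> bool" and m d :: nat
  assumes H: "bipartite_graph X Y E"
    and dense: "\<forall>X' Y'. X' \<subseteq> X \<and> Y' \<subseteq> Y \<and> card X' = m \<and> card Y' = m
                  \<longrightarrow> (\<exists>x\<in>X'. \<exists>y\<in>Y'. E x y)"
    and sizeY: "card Y \<ge> (3 * d + 4) * m"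
  shows "\<exists>B. B \<subseteq> X \<and> card B \<le> m \<and>
           (\<forall>U. U \<subseteq> X - B \<and> card U \<le> 2 * m \<longrightarrow>
                card (ext_nbhd (X \<union> Y) E U) \<ge> d * card U)"
proof -
  have "finite X" using H unfolding bipartite_graph_def by blast
  then obtain B where B: "B \<subseteq> X" "card B \<le> m" "card (ext_nbhd (X \<union> Y) E B) \<le> d * card B"
    and B_max: "\<And>S. S \<subseteq> X \<Longrightarrow> card S \<le> m \<Longrightarrow> card (ext_nbhd (X \<union> Y) E S) \<le> d * card S
                  \<Longrightarrow> card S \<le> card B"
    by (rule finite_subset_max_card[where P = "\<lambda>S. card S \<le> m \<and> card (ext_nbhd (X \<union> Y) E S) \<le> d * card S"])
      (auto simp: ext_nbhd_def)
  have "d * card U \<le> card (ext_nbhd (X \<union> Y) E U)" if "U \<subseteq> X - B" "card U \<le> 2 * m" for U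
    using bipartite_dense_expands_beside_max_poor_set[OF H dense sizeY B B_max that] .
  with B show ?thesis
    by (intro exI[of _ B]) auto
qed

end
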